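(* Let $b_n = 3n^2+3n+1$ for $n \ge 0$ and $a_n = -(2n^4-n^3)$ for $n \ge 1$. Define sequences $\{A_n\}_{n\ge -1}$ and $\{B_n\}_{n\ge -1}$ by $A_{-1}=1$, $A_0=b_0$, $B_{-1}=0$, $B_0=1$, and for $n\ge 1$, $$A_n = b_n A_{n-1} + a_n A_{n-2},\qquad B_n = b_n B_{n-1} + a_n B_{n-2}.$$ Then $B_n \neq 0$ for all $n \ge 0$, and the generalized continued fraction $$b_0 + \cfrac{a_1}{b_1 + \cfrac{a_2}{b_2 + \cdots}} \;=\; 1 - \cfrac{2\cdot 1^4 - 1^3}{7 - \cfrac{2\cdot 2^4 - 2^3}{19 - \cfrac{2\cdot 3^4-3^3}{37 - \cdots}}}$$ converges to $\dfrac{8}{\pi^2}$, i.e. $\displaystyle\lim_{n\to\infty} \frac{A_n}{B_n} = \frac{8}{\pi^2}$.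
   Context: The value of a generalized continued fraction $b_0 + \cfrac{a_1}{b_1 + \cfrac{a_2}{b_2+\cdots}}$ is defined as the limit of its convergents $A_n/B_n$, where $A_n, B_n$ are the numerator and denominator sequences given by the recurrences above. Although placed in a conjecture environment, this identity is the paper's main result, which it proves. *)

theory Defs
  imports "HOL-Analysis.Analysis"
begin

definition cf_b :: "nat \<Rightarrow> int" where
  "cf_b n = 3 * int n ^ 2 + 3 * int n + 1"

definition cf_a :: "nat \<Rightarrow> int" where
  "cf_a n = - (2 * int n ^ 4 - int n ^ 3)"

text \<open>Index-shifted sequences: cfA k = A_{k-1}, cfB k = B_{k-1}; so cfA (n+1) = A_n.\<close>
fun cfA :: "nat \<Rightarrow> int" where
  "cfA 0 = 1"
| "cfA (Suc 0) = cf_b 0"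
| "cfA (Suc (Suc n)) = cf_b (Suc n) * cfA (Suc n) + cf_a (Suc n) * cfA n"

fun cfB :: "nat \<Rightarrow> int" where
  "cfB 0 = 0"
| "cfB (Suc 0) = 1"
| "cfB (Suc (Suc n)) = cf_b (Suc n) * cfB (Suc n) + cf_a (Suc n) * cfB n"

end

theory Submission
  imports Defs
begin

(*
  The numerators are explicit: cfA (n+1) = (n+1) (2n+1) cfA n, i.e. cfA n = n! (2n-1)!!, because
  b_k k (2k-1) + a_k = k (2k-1) (k+1) (2k+1).  Euler's correspondence between series and continued
  fractions then gives the denominators as cfB n = cfA n * (t_0 + ... + t_(n-1)), where
  t_k = (2k)!!/(2k+1)!! / (2^k (k+1)) satisfies cfA (n+2) t_(n+1) = - a_(n+1) cfA n t_n.
  So the convergents are the reciprocals of the partial sums of sum t_k.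

  That sum comes from the Maclaurin series
    arcsin x / sqrt (1 - x^2) = sum (2n)!!/(2n+1)!! x^(2n+1),
  which holds because both sides solve (1 - x^2) y' - x y = 1 with y 0 = 0; integrating once gives
    arcsin x ^ 2 / 2 = sum (2n)!!/(2n+1)!! x^(2n+2) / (2n+2),
  and at x = 1/sqrt 2 this says sum t_k = 4 (pi/4)^2 / 2 = pi^2/8.
*)

(* (2n)!! / (2n+1)!! *)
fun dfact_ratio :: "nat \<Rightarrow> real" where
  "dfact_ratio 0 = 1"
| "dfact_ratio (Suc n) = dfact_ratio n * (2 * real n + 2) / (2 * real n + 3)"

lemma dfact_ratio_pos: "0 < dfact_ratio n"
  by (induction n) auto

lemma dfact_ratio_le_1: "dfact_ratio n \<le> 1"
proof (induction n)
  case (Suc n)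
  have "dfact_ratio n * (2 * real n + 2) / (2 * real n + 3) \<le> dfact_ratio n"
    using dfact_ratio_pos[of n] by (simp add: divide_simps)
  with Suc.IH show ?case
    by (simp only: dfact_ratio.simps(2))
qed simp

lemma summable_Suc_times_geometric:
  fixes q :: real
  assumes "\<bar>q\<bar> < 1"
  shows "summable (\<lambda>n. real (Suc n) * q ^ n)"
proof -
  have "summable (\<lambda>n. diffs (\<lambda>_. 1) n * q ^ n)"
  proof (rule termdiff_converges[where K = 1])
    fix x :: real assume "norm x < 1"
    then show "summable (\<lambda>n. 1 * x ^ n)" by (simp add: summable_geometric)
  qed (use assms in simp)
  then show ?thesis by (simp add: diffs_def)
qed

lemma bounded_coeffs_series_has_field_derivative:
  fixes c :: "nat \<Rightarrow> real"
  assumes c: "\<And>n. \<bar>c n\<bar> \<le> C" and x: "\<bar>x\<bar> < 1"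
  shows "summable (\<lambda>n. c n * x ^ Suc (2 * n + m))"
    and "summable (\<lambda>n. c n * real (Suc (2 * n + m)) * x ^ (2 * n + m))"
    and "((\<lambda>y. \<Sum>n. c n * y ^ Suc (2 * n + m)) has_field_derivative
          (\<Sum>n. c n * real (Suc (2 * n + m)) * x ^ (2 * n + m))) (at x)"
proof -
  define r where "r = (1 + \<bar>x\<bar>) / 2"
  have r: "\<bar>x\<bar> < r" "r < 1" using x by (auto simp: r_def)
  define q where "q = r\<^sup>2"
  have q: "0 \<le> q" "q < 1"
    using r abs_ge_zero[of x] by (auto simp: q_def abs_square_less_1)
  define M where "M n = C * (2 * (real (Suc n) * q ^ n) + real m * q ^ n)" for n
  have M: "summable M"
    unfolding M_def using q
    by (intro summable_mult summable_add summable_Suc_times_geometric summable_geometric) auto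
  have "0 \<le> C" using c[of 0] by linarith
  have M_bound: "norm (c n * real (Suc (2 * n + m)) * y ^ (2 * n + m)) \<le> M n"
    if "\<bar>y\<bar> \<le> r" for n y
  proof -
    have "\<bar>y\<bar> ^ (2 * n + m) \<le> \<bar>y\<bar> ^ (2 * n)"
      using that r by (intro power_decreasing) auto
    also have "\<dots> = (y\<^sup>2) ^ n"
      by (simp add: power_mult)
    also have "\<dots> \<le> q ^ n"
      unfolding q_def using power_mono[OF that abs_ge_zero, of 2] by (intro power_mono[of "y\<^sup>2"]) auto
    finally have y_pow: "\<bar>y\<bar> ^ (2 * n + m) \<le> q ^ n" .
    have "norm (c n * real (Suc (2 * n + m)) * y ^ (2 * n + m))
        = \<bar>c n\<bar> * real (Suc (2 * n + m)) * \<bar>y\<bar> ^ (2 * n + m)"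
      by (simp add: abs_mult power_abs)
    also have "\<dots> \<le> C * real (Suc (2 * n + m)) * q ^ n"
      using c[of n] y_pow \<open>0 \<le> C\<close> by (intro mult_mono) auto
    also have "\<dots> \<le> C * (real (2 * Suc n + m) * q ^ n)"
      unfolding mult.assoc using \<open>0 \<le> C\<close> q by (intro mult_left_mono mult_right_mono) auto
    also have "\<dots> = M n"
      by (simp add: M_def algebra_simps)
    finally show ?thesis .
  qed
  have unif: "uniformly_convergent_on {-r<..<r}
      (\<lambda>n y. \<Sum>i<n. c i * real (Suc (2 * i + m)) * y ^ (2 * i + m))"
    using M_bound M by (intro Weierstrass_m_test') auto
  have deriv: "((\<lambda>y. c n * y ^ Suc (2 * n + m)) has_field_derivative
      c n * real (Suc (2 * n + m)) * y ^ (2 * n + m)) (at y within {-r<..<r})" for n y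
    using DERIV_cmult[OF DERIV_pow[of "Suc (2 * n + m)"], of "c n"] by (simp add: mult.assoc)
  have x_interior: "x \<in> interior {-r<..<r}" and zero_in: "0 \<in> {-r<..<r}"
    using r by auto
  note series = has_field_derivative_series'[OF convex_real_interval(8) deriv unif zero_in _ x_interior]
  show "summable (\<lambda>n. c n * x ^ Suc (2 * n + m))"
    by (rule series(1)) simp
  show "((\<lambda>y. \<Sum>n. c n * y ^ Suc (2 * n + m)) has_field_derivative
          (\<Sum>n. c n * real (Suc (2 * n + m)) * x ^ (2 * n + m))) (at x)"
    by (rule series(2)) simp
  show "summable (\<lambda>n. c n * real (Suc (2 * n + m)) * x ^ (2 * n + m))"
    using M_bound[of x] r by (intro summable_comparison_test'[OF M]) auto
qed

lemma abs_dfact_ratio_le_1: "\<bar>dfact_ratio n\<bar> \<le> 1"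
  using dfact_ratio_pos[of n] dfact_ratio_le_1[of n] by simp

lemma
  assumes "\<bar>x\<bar> < 1"
  shows summable_dfact_ratio_odd_powers: "summable (\<lambda>n. dfact_ratio n * x ^ (2 * n + 1))"
    and summable_dfact_ratio_odd_powers_deriv:
      "summable (\<lambda>n. (2 * real n + 1) * dfact_ratio n * x ^ (2 * n))"
    and dfact_ratio_odd_powers_has_field_derivative:
      "((\<lambda>y. \<Sum>n. dfact_ratio n * y ^ (2 * n + 1)) has_field_derivative
         (\<Sum>n. (2 * real n + 1) * dfact_ratio n * x ^ (2 * n))) (at x)"
  using bounded_coeffs_series_has_field_derivative[OF abs_dfact_ratio_le_1 assms, where m = 0]
  by (simp_all add: ac_simps)

lemma arcsin_series_ode:
  assumes "\<bar>x\<bar> < 1"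
  shows "(1 - x\<^sup>2) * (\<Sum>n. (2 * real n + 1) * dfact_ratio n * x ^ (2 * n))
           - x * (\<Sum>n. dfact_ratio n * x ^ (2 * n + 1)) = 1"
proof -
  define u where "u n = (2 * real n + 1) * dfact_ratio n * x ^ (2 * n)" for n
  have u: "summable u"
    unfolding u_def using assms by (rule summable_dfact_ratio_odd_powers_deriv)
  have v: "summable (\<lambda>n. dfact_ratio n * x ^ (2 * n + 1))"
    using assms by (rule summable_dfact_ratio_odd_powers)
  have u_Suc: "u (Suc n) = x\<^sup>2 * u n + x * (dfact_ratio n * x ^ (2 * n + 1))" for n
  proof -
    have "(2 * real (Suc n) + 1) * dfact_ratio (Suc n) = (2 * real n + 2) * dfact_ratio n"
      by (simp add: field_simps)
    then have "u (Suc n) = (2 * real n + 2) * dfact_ratio n * x ^ (2 * n + 2)"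
      by (simp add: u_def)
    also have "\<dots> = x\<^sup>2 * u n + x * (dfact_ratio n * x ^ (2 * n + 1))"
      by (simp add: u_def algebra_simps power_add power2_eq_square)
    finally show ?thesis .
  qed
  have "suminf u - u 0 = (\<Sum>n. u (Suc n))"
    using suminf_split_head[OF u] by simp
  also have "\<dots> = x\<^sup>2 * suminf u + x * (\<Sum>n. dfact_ratio n * x ^ (2 * n + 1))"
    unfolding u_Suc using u v by (simp add: suminf_add[symmetric] suminf_mult summable_mult)
  finally show ?thesis
    by (simp add: u_def[abs_def] algebra_simps)
qed

lemma arcsin_div_sqrt_sums:
  assumes "\<bar>x\<bar> < 1"
  shows "(\<lambda>n. dfact_ratio n * x ^ (2 * n + 1)) sums (arcsin x / sqrt (1 - x\<^sup>2))"
proof -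
  define S where "S y = (\<Sum>n. dfact_ratio n * y ^ (2 * n + 1))" for y
  define S' where "S' y = (\<Sum>n. (2 * real n + 1) * dfact_ratio n * y ^ (2 * n))" for y
  define g where "g y = S y * sqrt (1 - y\<^sup>2) - arcsin y" for y
  have "g x = g 0"
  proof (rule DERIV_isconst3[of "-1" 1 x 0 g])
    show "-1 < (1::real)" "x \<in> {-1<..<1}" "(0::real) \<in> {-1<..<1}"
      using assms by auto
    fix y :: real assume "y \<in> {-1<..<1}"
    then have y: "\<bar>y\<bar> < 1" by auto
    define w where "w = sqrt (1 - y\<^sup>2)"
    have "0 < 1 - y\<^sup>2" using y by (simp add: abs_square_less_1)
    then have w: "0 < w" "w\<^sup>2 = 1 - y\<^sup>2" by (simp_all add: w_def)
    have dS: "(S has_field_derivative S' y) (at y)"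
      unfolding S_def[abs_def] S'_def using y by (rule dfact_ratio_odd_powers_has_field_derivative)
    have d_sqrt: "((\<lambda>y. sqrt (1 - y\<^sup>2)) has_field_derivative - y / w) (at y)"
      using \<open>0 < 1 - y\<^sup>2\<close> unfolding w_def
      by (auto intro!: derivative_eq_intros simp: field_simps)
    have d_arcsin: "(arcsin has_field_derivative 1 / w) (at y)"
      using DERIV_arcsin[of y] y by (simp add: w_def divide_inverse)
    have "(g has_field_derivative S' y * sqrt (1 - y\<^sup>2) + - y / w * S y - 1 / w) (at y)"
      unfolding g_def[abs_def] by (rule DERIV_diff[OF DERIV_mult[OF dS d_sqrt] d_arcsin])
    moreover have "S' y * sqrt (1 - y\<^sup>2) + - y / w * S y - 1 / w
        = ((1 - y\<^sup>2) * S' y - y * S y - 1) / w"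
      unfolding w_def[symmetric] w(2)[symmetric] using w(1) by (simp add: field_simps power2_eq_square)
    moreover have "(1 - y\<^sup>2) * S' y - y * S y = 1"
      using arcsin_series_ode[OF y] by (simp add: S_def S'_def)
    ultimately show "(g has_field_derivative 0) (at y)" by simp
  qed
  moreover have "S 0 = 0" by (simp add: S_def)
  moreover have "0 < sqrt (1 - x\<^sup>2)" using assms by (simp add: abs_square_less_1)
  ultimately have "S x = arcsin x / sqrt (1 - x\<^sup>2)"
    by (simp add: g_def field_simps)
  then show ?thesis
    using summable_sums[OF summable_dfact_ratio_odd_powers[OF assms]] by (simp add: S_def)
qed

lemma arcsin_squared_sums:
  assumes "\<bar>x\<bar> < 1"
  shows "(\<lambda>n. dfact_ratio n / (2 * real n + 2) * x ^ (2 * n + 2)) sums (arcsin x ^ 2 / 2)"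
proof -
  define F where "F y = (\<Sum>n. dfact_ratio n / (2 * real n + 2) * y ^ (2 * n + 2))" for y
  define h where "h y = F y - arcsin y ^ 2 / 2" for y
  have coeff: "\<bar>dfact_ratio n / (2 * real n + 2)\<bar> \<le> 1" for n
    using dfact_ratio_pos[of n] dfact_ratio_le_1[of n] by (simp add: field_simps)
  have coeff_deriv: "dfact_ratio n / (2 * real n + 2) * real (Suc (2 * n + 1)) = dfact_ratio n" for n
    by (simp add: field_simps)
  note F_series = bounded_coeffs_series_has_field_derivative
    [where c = "\<lambda>n. dfact_ratio n / (2 * real n + 2)" and m = 1, OF coeff, unfolded coeff_deriv]
  have "h x = h 0"
  proof (rule DERIV_isconst3[of "-1" 1 x 0 h])
    show "-1 < (1::real)" "x \<in> {-1<..<1}" "(0::real) \<in> {-1<..<1}"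
      using assms by auto
    fix y :: real assume "y \<in> {-1<..<1}"
    then have y: "\<bar>y\<bar> < 1" by auto
    have dF: "(F has_field_derivative (\<Sum>n. dfact_ratio n * y ^ (2 * n + 1))) (at y)"
      using F_series(3)[OF y] by (simp add: F_def[abs_def])
    have "(h has_field_derivative
        (\<Sum>n. dfact_ratio n * y ^ (2 * n + 1)) - arcsin y / sqrt (1 - y\<^sup>2)) (at y)"
      unfolding h_def[abs_def] using y
      by (auto intro!: derivative_eq_intros dF simp: abs_square_less_1 field_simps)
    moreover have "(\<Sum>n. dfact_ratio n * y ^ (2 * n + 1)) = arcsin y / sqrt (1 - y\<^sup>2)"
      using arcsin_div_sqrt_sums[OF y] by (rule sums_unique[symmetric])
    ultimately show "(h has_field_derivative 0) (at y)" by simp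
  qed
  then have "F x = arcsin x ^ 2 / 2"
    by (simp add: h_def F_def)
  moreover have "(\<lambda>n. dfact_ratio n / (2 * real n + 2) * x ^ (2 * n + 2)) sums F x"
    using summable_sums[OF F_series(1)[OF assms]] by (simp add: F_def)
  ultimately show ?thesis by (simp only:)
qed

definition cf_term :: "nat \<Rightarrow> real" where
  "cf_term k = dfact_ratio k / (2 ^ k * (real k + 1))"

lemma cf_term_sums: "cf_term sums (pi\<^sup>2 / 8)"
proof -
  define x :: real where "x = sqrt 2 / 2"
  have x2: "x\<^sup>2 = 1 / 2"
    by (simp add: x_def power_divide)
  then have "\<bar>x\<bar> < 1"
    by (subst abs_square_less_1[symmetric]) simp
  have "arcsin x = pi / 4"
    unfolding x_def sin_45[symmetric] by (rule arcsin_sin) (use pi_gt_zero in linarith)+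
  have term_eq: "dfact_ratio n / (2 * real n + 2) * x ^ (2 * n + 2) = cf_term n / 4" for n
  proof -
    have "x ^ (2 * n + 2) = (x\<^sup>2) ^ (n + 1)"
      unfolding power_mult[symmetric] by (simp add: algebra_simps)
    also have "\<dots> = 1 / (2 * 2 ^ n)"
      by (simp add: x2 power_divide)
    finally have x_pow: "x ^ (2 * n + 2) = 1 / (2 * 2 ^ n)" .
    show ?thesis
      unfolding x_pow by (simp add: cf_term_def field_simps)
  qed
  have "(\<lambda>n. cf_term n / 4) sums ((pi / 4)\<^sup>2 / 2)"
    using arcsin_squared_sums[OF \<open>\<bar>x\<bar> < 1\<close>]
    unfolding term_eq \<open>arcsin x = pi / 4\<close> .
  then show ?thesis
    using sums_mult[of _ _ 4] by (fastforce simp: power_divide)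
qed

lemma cfA_Suc: "cfA (Suc n) = (int n + 1) * (2 * int n + 1) * cfA n"
proof (induction n rule: cfA.induct)
  case (3 n)
  have IH: "cfA (Suc (Suc n)) = (int n + 2) * (2 * int n + 3) * cfA (Suc n)"
    using "3.IH" by (simp add: algebra_simps del: cfA.simps)
  have "cfA (Suc (Suc (Suc n)))
      = (cf_b (Suc (Suc n)) * ((int n + 2) * (2 * int n + 3)) + cf_a (Suc (Suc n))) * cfA (Suc n)"
    by (subst cfA.simps(3), subst IH) (simp add: algebra_simps)
  also have "\<dots> = (int n + 3) * (2 * int n + 5) * ((int n + 2) * (2 * int n + 3) * cfA (Suc n))"
    by (simp add: cf_a_def cf_b_def power2_eq_square power3_eq_cube power4_eq_xxxx algebra_simps)
  also have "\<dots> = (int (Suc (Suc n)) + 1) * (2 * int (Suc (Suc n)) + 1) * cfA (Suc (Suc n))"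
    unfolding IH by (simp add: algebra_simps)
  finally show ?case .
qed (simp_all add: cf_a_def cf_b_def)

lemma cfA_pos: "0 < cfA n"
  by (induction n) (simp_all add: cfA_Suc)

lemma cf_term_Suc: "(real n + 2) * (2 * real n + 3) * cf_term (Suc n) = (real n + 1)\<^sup>2 * cf_term n"
proof -
  have "0 < real n + 1" "0 < real n + 2" "0 < 2 * real n + 3"
    by linarith+
  then show ?thesis
    unfolding cf_term_def by (simp add: divide_simps) (simp add: algebra_simps power2_eq_square)
qed

lemma cfA_cf_term:
  "real_of_int (cfA (Suc (Suc n))) * cf_term (Suc n)
     = - real_of_int (cf_a (Suc n)) * real_of_int (cfA n) * cf_term n"
proof -
  have "real_of_int (cfA (Suc (Suc n)))
      = (real n + 1) * (2 * real n + 1) * real_of_int (cfA n) * ((real n + 2) * (2 * real n + 3))"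
    by (simp add: cfA_Suc algebra_simps del: cfA.simps)
  then have "real_of_int (cfA (Suc (Suc n))) * cf_term (Suc n)
      = (real n + 1) * (2 * real n + 1) * real_of_int (cfA n) * ((real n + 1)\<^sup>2 * cf_term n)"
    by (simp flip: cf_term_Suc)
  also have "\<dots> = - real_of_int (cf_a (Suc n)) * real_of_int (cfA n) * cf_term n"
    by (simp add: cf_a_def power2_eq_square power3_eq_cube power4_eq_xxxx algebra_simps)
  finally show ?thesis .
qed

lemma recurrence_times_partial_sum:
  fixes a b A0 A1 A2 s t0 t1 :: "'a :: comm_ring"
  assumes "A2 = b * A1 + a * A0" and "A2 * t1 = - a * A0 * t0"
  shows "A2 * (s + t0 + t1) = b * (A1 * (s + t0)) + a * (A0 * s)"
proof -
  have "A2 * (s + t0 + t1) = (b * A1 + a * A0) * (s + t0) - a * A0 * t0"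
    using assms by (simp add: distrib_left)
  then show ?thesis
    by (simp add: algebra_simps)
qed

lemma cfB_eq: "real_of_int (cfB n) = real_of_int (cfA n) * (\<Sum>k<n. cf_term k)"
proof (induction n rule: cfB.induct)
  case (3 n)
  have "real_of_int (cfA (Suc (Suc n))) * ((\<Sum>k<n. cf_term k) + cf_term n + cf_term (Suc n))
      = real_of_int (cf_b (Suc n)) * (real_of_int (cfA (Suc n)) * ((\<Sum>k<n. cf_term k) + cf_term n))
        + real_of_int (cf_a (Suc n)) * (real_of_int (cfA n) * (\<Sum>k<n. cf_term k))"
    by (rule recurrence_times_partial_sum) (simp, rule cfA_cf_term)
  with "3.IH" show ?case
    by simp
qed (simp_all add: cf_b_def cf_term_def)

theorem mainTheorem1:
  shows "(\<forall>n. cfB (Suc n) \<noteq> 0) \<and>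
         (\<lambda>n. real_of_int (cfA (Suc n)) / real_of_int (cfB (Suc n))) \<longlonglongrightarrow> 8 / pi\<^sup>2"
proof -
  have partial_sum_pos: "0 < (\<Sum>k<Suc n. cf_term k)" for n
    by (intro sum_pos) (auto simp: cf_term_def dfact_ratio_pos)
  have "cfB (Suc n) \<noteq> 0" for n
    using cfB_eq[of "Suc n"] cfA_pos[of "Suc n"] partial_sum_pos[of n] by auto
  moreover have "real_of_int (cfA (Suc n)) / real_of_int (cfB (Suc n)) = 1 / (\<Sum>k<Suc n. cf_term k)" for n
    using cfB_eq[of "Suc n"] cfA_pos[of "Suc n"] by simp
  moreover have "(\<lambda>n. \<Sum>k<Suc n. cf_term k) \<longlonglongrightarrow> pi\<^sup>2 / 8"
    using LIMSEQ_Suc[OF cf_term_sums[unfolded sums_def]] .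
  then have "(\<lambda>n. 1 / (\<Sum>k<Suc n. cf_term k)) \<longlonglongrightarrow> 8 / pi\<^sup>2"
    using tendsto_divide[OF tendsto_const, of _ "pi\<^sup>2 / 8" sequentially 1] by simp
  ultimately show ?thesis
    by simp
qed

end
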